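(* Let $V\subseteq B(H)\otimes N$ be a quantum multi-relation on $(M,N)$, where $M$ and $N$ are minimally represented on $H$ and $K$, and let $\mathcal{A}_{\mathcal{P}_V}$ and $\mathcal{A}_{\mathcal{S}_V}$ be its quantum multi-adjacency operator and weighted adjacency operator. Then $$(\mathrm{id}\otimes\mathrm{tr}_{L^2(N)})(\mathcal{A}_{\mathcal{P}_V})=\mathcal{A}_{\mathcal{S}_V}.$$
   Context: All Hilbert spaces are finite dimensional. $M\subseteq B(H)$, $N\subseteq B(K)$ are finite-dimensional von Neumann algebras, minimally represented: $M'=Z(M)$, $N'=Z(N)$. $A^{op}$ denotes the opposite algebra. A quantum multi-relation on $(M,N)$ is a subspace $V\subseteq B(H)\otimes N$ which is an $(M'\otimes1)$–$(M'\otimes1)$ bimodule with $(1\otimes Z(N))V\subseteq V$. Weaver action: $\pi(T_1\otimes T_2\otimes T_3\otimes T_4)(S_1\otimes S_2)=T_1S_1T_2\otimes T_3S_2T_4$ of $M\otimes M^{op}\otimes N\otimes N^{op}$ on $B(H\otimes K)$ (with Hilbert–Schmidt inner product). The multi-edge indicator $\mathcal{P}_V$ is the projection in $M\otimes M^{op}\otimes N\otimes N^{op}$ such that $\pi(\mathcal{P}_V)$ is the orthogonal projection onto $V$. $\mathcal{S}_V=(\mathrm{id}\otimes\mathrm{id}\otimes\mathrm{tr}_K)(\mathrm{id}\otimes\mathrm{id}\otimes m)(\mathcal{P}_V)\in M\otimes M^{op}$, with $m(a\otimes b)=ab$ the multiplication of $N$. The quantum multi-adjacency operator $\mathcal{A}_{\mathcal{P}_V}:M\otimes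 N\to M\otimes N$ is $\mathcal{A}_{\mathcal{P}_V}(m\otimes n)=(\mathrm{tr}_H\otimes\mathrm{id}\otimes\mathrm{tr}_K\otimes\mathrm{id})(\mathcal{P}_V(m\otimes1\otimes n\otimes1))$ (product in $M\otimes M^{op}\otimes N\otimes N^{op}$, output identified with $M\otimes N$ as vector spaces); the weighted adjacency operator $\mathcal{A}_{\mathcal{S}_V}:M\to M$ is $\mathcal{A}_{\mathcal{S}_V}(m)=(\mathrm{tr}_H\otimes\mathrm{id})(\mathcal{S}_V(m\otimes1))$. $L^2(M)$, $L^2(N)$ are $M,N$ with Hilbert–Schmidt inner products from $\mathrm{tr}_H,\mathrm{tr}_K$; thus $\mathcal{A}_{\mathcal{P}_V}\in B(L^2(M))\otimes B(L^2(N))$, $\mathcal{A}_{\mathcal{S}_V}\in B(L^2(M))$, and $\mathrm{tr}_{L^2(N)}$ is the trace on $B(L^2(N))$. *)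

theory Defs
  imports Complex_Main
begin

text \<open>H = C^'h, K = C^'k for finite index types. An operator on a
finite-dimensional Hilbert space with basis indexed by 'a is its matrix 'a sqmat.
B(H (x) K) is identified with ('h x 'k) sqmat, and the Kronecker product kron a b
realises a (x) b. The algebraic tensor product B(H)(x)B(H)(x)B(K)(x)B(K) is realised
as ('h x 'h x 'k x 'k) sqmat (via kron4); as a vector space this is the same
for the opposite algebras.\<close>

type_synonym 'a sqmat = "'a \<Rightarrow> 'a \<Rightarrow> complex"

definition mmult :: "'a::finite sqmat \<Rightarrow> 'a sqmat \<Rightarrow> 'a sqmat" where
  "mmult A B = (\<lambda>i j. \<Sum>l\<in>UNIV. A i l * B l j)"

definition madj :: "'a sqmat \<Rightarrow> 'a sqmat" where
  "madj A = (\<lambda>i j. cnj (A j i))"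

definition mone :: "'a sqmat" where
  "mone = (\<lambda>i j. if i = j then 1 else 0)"

definition mtr :: "'a::finite sqmat \<Rightarrow> complex" where
  "mtr A = (\<Sum>i\<in>UNIV. A i i)"

text \<open>Hilbert--Schmidt inner product (unnormalised trace), linear in the 2nd slot.\<close>
definition hs_inner :: "'a::finite sqmat \<Rightarrow> 'a sqmat \<Rightarrow> complex" where
  "hs_inner A B = mtr (mmult (madj A) B)"

definition is_subspace :: "'a sqmat set \<Rightarrow> bool" where
  "is_subspace S \<longleftrightarrow> (\<lambda>i j. 0) \<in> S \<and> (\<forall>x\<in>S. \<forall>y\<in>S. (\<lambda>i j. x i j + y i j) \<in> S)
     \<and> (\<forall>c::complex. \<forall>x\<in>S. (\<lambda>i j. c * x i j) \<in> S)"

definition fd_vn_algebra :: "'a::finite sqmat set \<Rightarrow> bool" where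
  "fd_vn_algebra M \<longleftrightarrow> is_subspace M \<and> mone \<in> M \<and>
     (\<forall>x\<in>M. \<forall>y\<in>M. mmult x y \<in> M) \<and> (\<forall>x\<in>M. madj x \<in> M)"

definition commutant :: "'a::finite sqmat set \<Rightarrow> 'a sqmat set" where
  "commutant M = {x. \<forall>m\<in>M. mmult x m = mmult m x}"

definition center :: "'a::finite sqmat set \<Rightarrow> 'a sqmat set" where
  "center M = M \<inter> commutant M"

definition minimally_represented :: "'a::finite sqmat set \<Rightarrow> bool" where
  "minimally_represented M \<longleftrightarrow> commutant M = center M"

definition kron :: "'a sqmat \<Rightarrow> 'b sqmat \<Rightarrow> ('a \<times> 'b) sqmat" where
  "kron A B = (\<lambda>(i, k) (j, l). A i j * B k l)"

definition kron4 :: "'a sqmat \<Rightarrow> 'b sqmat \<Rightarrow> 'c sqmat \<Rightarrow> 'd sqmat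
    \<Rightarrow> ('a \<times> 'b \<times> 'c \<times> 'd) sqmat" where
  "kron4 A B C D = (\<lambda>(i1, i2, i3, i4) (j1, j2, j3, j4). A i1 j1 * B i2 j2 * C i3 j3 * D i4 j4)"

definition msum_list :: "'a sqmat list \<Rightarrow> 'a sqmat" where
  "msum_list xs = (\<lambda>i j. sum_list (map (\<lambda>x. x i j) xs))"

text \<open>Algebraic tensor products S (x) T and S1 (x) S2 (x) S3 (x) S4 (finite sums of
elementary tensors; scalars are absorbed since the factors are subspaces).\<close>
definition alg_tensor2 :: "'a sqmat set \<Rightarrow> 'b sqmat set \<Rightarrow> ('a \<times> 'b) sqmat set" where
  "alg_tensor2 S T = {msum_list (map (\<lambda>(a, b). kron a b) xs) | xs.
      \<forall>(a, b)\<in>set xs. a \<in> S \<and> b \<in> T}"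

definition alg_tensor4 :: "'a sqmat set \<Rightarrow> 'b sqmat set \<Rightarrow> 'c sqmat set \<Rightarrow> 'd sqmat set
    \<Rightarrow> ('a \<times> 'b \<times> 'c \<times> 'd) sqmat set" where
  "alg_tensor4 S1 S2 S3 S4 = {msum_list (map (\<lambda>(a, b, c, d). kron4 a b c d) xs) | xs.
      \<forall>(a, b, c, d)\<in>set xs. a \<in> S1 \<and> b \<in> S2 \<and> c \<in> S3 \<and> d \<in> S4}"

definition quantum_multi_relation ::
  "'h::finite sqmat set \<Rightarrow> 'k::finite sqmat set \<Rightarrow> ('h \<times> 'k) sqmat set \<Rightarrow> bool" where
  "quantum_multi_relation M N V \<longleftrightarrow>
     is_subspace V \<and> V \<subseteq> alg_tensor2 UNIV N \<and>
     (\<forall>z\<in>commutant M. \<forall>v\<in>V. mmult (kron z mone) v \<in> V \<and> mmult v (kron z mone) \<in> V) \<and>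
     (\<forall>z\<in>center N. \<forall>v\<in>V. mmult (kron mone z) v \<in> V)"

text \<open>Weaver action: the linear extension of
pi(T1 (x) T2 (x) T3 (x) T4)(S1 (x) S2) = T1 S1 T2 (x) T3 S2 T4, written in coordinates.\<close>
definition weaver_pi :: "('h::finite \<times> 'h \<times> 'k::finite \<times> 'k) sqmat
    \<Rightarrow> ('h \<times> 'k) sqmat \<Rightarrow> ('h \<times> 'k) sqmat" where
  "weaver_pi X S = (\<lambda>(p, q) (r, s). \<Sum>a\<in>UNIV. \<Sum>b\<in>UNIV. \<Sum>c\<in>UNIV. \<Sum>d\<in>UNIV.
       X (p, c, q, d) (a, r, b, s) * S (a, b) (c, d))"

definition is_orth_proj_onto :: "'a::finite sqmat set \<Rightarrow> ('a sqmat \<Rightarrow> 'a sqmat) \<Rightarrow> bool" where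
  "is_orth_proj_onto V Q \<longleftrightarrow> (\<forall>S. Q S \<in> V) \<and>
     (\<forall>S. \<forall>v\<in>V. hs_inner v (\<lambda>i j. S i j - Q S i j) = 0)"

text \<open>Multi-edge indicator: the element P of M (x) M^op (x) N (x) N^op with pi(P)
the orthogonal projection onto V (pi is faithful, so P is unique and is a projection).\<close>
definition multi_edge_indicator ::
  "'h::finite sqmat set \<Rightarrow> 'k::finite sqmat set \<Rightarrow> ('h \<times> 'k) sqmat set
     \<Rightarrow> ('h \<times> 'h \<times> 'k \<times> 'k) sqmat \<Rightarrow> bool" where
  "multi_edge_indicator M N V P \<longleftrightarrow>
     P \<in> alg_tensor4 M M N N \<and> is_orth_proj_onto V (weaver_pi P)"

text \<open>(id (x) id (x) m): multiply the 3rd and 4th tensor factors.\<close>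
definition mult_34 :: "('a \<times> 'b \<times> 'c::finite \<times> 'c) sqmat \<Rightarrow> ('a \<times> 'b \<times> 'c) sqmat" where
  "mult_34 P = (\<lambda>(i, i', k) (j, j', l). \<Sum>x\<in>UNIV. P (i, i', k, x) (j, j', x, l))"

definition trace_3 :: "('a \<times> 'b \<times> 'c::finite) sqmat \<Rightarrow> ('a \<times> 'b) sqmat" where
  "trace_3 Q = (\<lambda>(i, i') (j, j'). \<Sum>k\<in>UNIV. Q (i, i', k) (j, j', k))"

definition trace_1 :: "('a::finite \<times> 'b) sqmat \<Rightarrow> 'b sqmat" where
  "trace_1 X = (\<lambda>i' j'. \<Sum>i\<in>UNIV. X (i, i') (i, j'))"

definition trace_13 :: "('a::finite \<times> 'b \<times> 'c::finite \<times> 'd) sqmat \<Rightarrow> ('b \<times> 'd) sqmat" where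
  "trace_13 Z = (\<lambda>(i', k') (j', l'). \<Sum>i\<in>UNIV. \<Sum>k\<in>UNIV. Z (i, i', k, k') (i, j', k, l'))"

definition emb_13 :: "('a \<times> 'c) sqmat \<Rightarrow> ('a \<times> 'b \<times> 'c \<times> 'd) sqmat" where
  "emb_13 Y = (\<lambda>(i, i', k, k') (j, j', l, l'). Y (i, k) (j, l) * mone i' j' * mone k' l')"

definition S_V :: "('h::finite \<times> 'h \<times> 'k::finite \<times> 'k) sqmat \<Rightarrow> ('h \<times> 'h) sqmat" where
  "S_V P = trace_3 (mult_34 P)"

text \<open>Quantum multi-adjacency operator, applied to Y in M (x) N (a (x) b \<mapsto>
(tr (x) id (x) tr (x) id)(P (a (x) 1 (x) b (x) 1))); the product with elements of the
form x (x) 1 (x) y (x) 1 agrees in the opposite algebra with the matrix product.\<close>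
definition multi_adjacency :: "('h::finite \<times> 'h \<times> 'k::finite \<times> 'k) sqmat
    \<Rightarrow> ('h \<times> 'k) sqmat \<Rightarrow> ('h \<times> 'k) sqmat" where
  "multi_adjacency P Y = trace_13 (mmult P (emb_13 Y))"

definition weighted_adjacency :: "('h::finite \<times> 'h) sqmat \<Rightarrow> 'h sqmat \<Rightarrow> 'h sqmat" where
  "weighted_adjacency S m = trace_1 (mmult S (kron m mone))"

definition hs_onb :: "'a::finite sqmat set \<Rightarrow> 'a sqmat set \<Rightarrow> bool" where
  "hs_onb N B \<longleftrightarrow> finite B \<and> B \<subseteq> N \<and>
     (\<forall>b\<in>B. \<forall>b'\<in>B. hs_inner b b' = (if b = b' then 1 else 0)) \<and>
     (\<forall>x\<in>N. \<exists>c. x = (\<lambda>i j. \<Sum>b\<in>B. c b * b i j))"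

definition slice_2 :: "'k::finite sqmat \<Rightarrow> ('h \<times> 'k) sqmat \<Rightarrow> 'h sqmat" where
  "slice_2 f Y = (\<lambda>i j. \<Sum>k\<in>UNIV. \<Sum>l\<in>UNIV. cnj (f k l) * Y (i, k) (j, l))"

text \<open>(id (x) Tr_{L^2(N)})(A), for A a linear map on L^2(M)(x)L^2(N), computed in an
orthonormal basis B of L^2(N), applied to m.\<close>
definition partial_trace_L2 ::
  "'k::finite sqmat set \<Rightarrow> (('h \<times> 'k) sqmat \<Rightarrow> ('h \<times> 'k) sqmat) \<Rightarrow> 'h sqmat \<Rightarrow> 'h sqmat" where
  "partial_trace_L2 B A m = (\<lambda>i j. \<Sum>b\<in>B. slice_2 b (A (kron m b)) i j)"

end

theory Submission
  imports Defs
begin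

text \<open>For an orthonormal basis \<open>B\<close> of a \<open>*\<close>-closed subspace \<open>N\<close>, the kernel
\<open>\<Sum>b\<in>B. cnj (b k l) * b g h\<close> reproduces \<open>N\<close>: \<open>\<Sum>b\<in>B. cnj (b k l) * tr (c b) = c l k\<close> for
\<open>c \<in> N\<close>. Since \<open>P \<in> M \<otimes> M \<otimes> N \<otimes> N\<close>, every slice of \<open>P\<close> in its third leg lies in \<open>N\<close>;
so when the partial trace is expanded in \<open>B\<close>, the sum over \<open>B\<close> collapses and the third leg
of \<open>P\<close> is contracted against the fourth, which is \<open>S_V P\<close>.\<close>

lemma hs_inner_sum_right:
  "hs_inner a (\<lambda>i j. \<Sum>b\<in>B. c b * b i j) = (\<Sum>b\<in>B. c b * hs_inner a b)"
  unfolding hs_inner_def mtr_def mmult_def madj_def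
  by (simp add: sum_distrib_left sum_distrib_right mult_ac sum.swap[of _ B])

lemma hs_onb_expansion:
  assumes "hs_onb N B" and "x \<in> N"
  shows "x = (\<lambda>i j. \<Sum>b\<in>B. hs_inner b x * b i j)"
proof -
  obtain c where c: "x = (\<lambda>i j. \<Sum>b\<in>B. c b * b i j)"
    using assms unfolding hs_onb_def by blast
  have "hs_inner b x = c b" if "b \<in> B" for b
  proof -
    have "hs_inner b x = (\<Sum>b'\<in>B. c b' * hs_inner b b')"
      by (subst c) (rule hs_inner_sum_right)
    also have "\<dots> = (\<Sum>b'\<in>B. if b' = b then c b' else 0)"
      using assms(1) that unfolding hs_onb_def by (intro sum.cong) auto
    also have "\<dots> = c b"
      using assms(1) that unfolding hs_onb_def by simp
    finally show ?thesis .
  qed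
  then show ?thesis
    by (subst (1) c) (auto intro!: ext sum.cong)
qed

lemma hs_onb_reproducing:
  assumes "hs_onb N B" and "madj c \<in> N"
  shows "(\<Sum>b\<in>B. cnj (b k l) * mtr (mmult c b)) = c l k"
proof -
  have "cnj (hs_inner b (madj c)) = mtr (mmult c b)" for b
    unfolding hs_inner_def mtr_def mmult_def madj_def by (simp add: mult.commute)
  moreover have "madj c k l = (\<Sum>b\<in>B. hs_inner b (madj c) * b k l)"
    using arg_cong[where f = "\<lambda>x. x k l", OF hs_onb_expansion[OF assms]] by simp
  then have "c l k = cnj (\<Sum>b\<in>B. hs_inner b (madj c) * b k l)"
    by (metis complex_cnj_cnj madj_def)
  ultimately show ?thesis
    by (simp add: mult.commute)
qed

lemma msum_list_Nil: "msum_list [] = (\<lambda>i j. 0)"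
  by (simp add: msum_list_def)

lemma msum_list_Cons: "msum_list (x # xs) = (\<lambda>i j. x i j + msum_list xs i j)"
  by (simp add: msum_list_def)

lemma alg_tensor4_slice_3:
  assumes "is_subspace S3" and "X \<in> alg_tensor4 S1 S2 S3 S4"
  shows "(\<lambda>k l. X (i1, i2, k, i4) (j1, j2, l, j4)) \<in> S3"
proof -
  obtain xs where X: "X = msum_list (map (\<lambda>(a, b, c, d). kron4 a b c d) xs)"
    and xs: "\<forall>(a, b, c, d)\<in>set xs. c \<in> S3"
    using assms(2) unfolding alg_tensor4_def by blast
  from xs show ?thesis
    unfolding X
  proof (induction xs)
    case Nil
    then show ?case
      using assms(1) by (simp add: msum_list_Nil is_subspace_def)
  next
    case (Cons x xs)
    obtain a b c d where x: "x = (a, b, c, d)" and c: "c \<in> S3"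
      using Cons.prems by (cases x) auto
    have "(\<lambda>k l. (a i1 j1 * b i2 j2 * d i4 j4) * c k l) \<in> S3"
      using assms(1) c unfolding is_subspace_def by blast
    with Cons show ?case
      using assms(1) unfolding is_subspace_def
      by (simp add: x msum_list_Cons kron4_def mult_ac)
  qed
qed

lemma sum_UNIV_prod:
  "(\<Sum>x\<in>UNIV. f x) = (\<Sum>a\<in>UNIV. \<Sum>b\<in>UNIV. f (a, b))"
  by (simp add: sum.cartesian_product UNIV_Times_UNIV[symmetric] del: UNIV_Times_UNIV)

lemma mult_if_zero:
  fixes x y :: "'a::mult_zero"
  shows "x * (if c then y else 0) = (if c then x * y else 0)"
    and "(if c then y else 0) * x = (if c then y * x else 0)"
  by simp_all

lemma sum_if_zero:
  "(\<Sum>x\<in>A. if c then f x else 0) = (if c then sum f A else 0)"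
  by simp

lemma multi_adjacency_kron_entry:
  "multi_adjacency P (kron m b) (i', k') (j', l') =
    (\<Sum>i\<in>UNIV. \<Sum>g\<in>UNIV. m g i * mtr (mmult (\<lambda>k l. P (i, i', k, k') (g, j', l, l')) b))"
  unfolding multi_adjacency_def trace_13_def mmult_def emb_13_def kron_def mtr_def mone_def
  by (simp add: sum_UNIV_prod mult_if_zero sum_if_zero sum_distrib_left mult_ac)
    (rule sum.cong[OF refl], rule sum.swap)

lemma weighted_adjacency_S_V_entry:
  "weighted_adjacency (S_V P) m i' j' =
    (\<Sum>i\<in>UNIV. \<Sum>g\<in>UNIV. m g i * (\<Sum>k\<in>UNIV. \<Sum>l\<in>UNIV. P (i, i', k, l) (g, j', l, k)))"
  unfolding weighted_adjacency_def S_V_def trace_1_def trace_3_def mult_34_def mmult_def kron_def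
    mone_def
  by (simp add: sum_UNIV_prod mult_if_zero sum_if_zero sum_distrib_left mult_ac)

lemma sum_pull_out_weights:
  "(\<Sum>b\<in>B. \<Sum>k\<in>K. \<Sum>l\<in>L. c b k l * (\<Sum>i\<in>I. \<Sum>g\<in>G. x i g * f i g k l b)) =
    (\<Sum>i\<in>I. \<Sum>g\<in>G. x i g * (\<Sum>k\<in>K. \<Sum>l\<in>L. \<Sum>b\<in>B. c b k l * f i g k l b))"
  for x :: "'i \<Rightarrow> 'g \<Rightarrow> 'a::comm_semiring_0"
  by (simp only: sum_distrib_left, simp only: sum.swap[of _ B], simp only: sum.swap[of _ K],
      simp only: sum.swap[of _ L], simp add: mult.left_commute)

lemma partial_trace_multi_adjacency:
  assumes onb: "hs_onb N B" and adj_closed: "\<And>c. c \<in> N \<Longrightarrow> madj c \<in> N"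
    and slices: "\<And>i i' g j' k' l'. (\<lambda>k l. P (i, i', k, k') (g, j', l, l')) \<in> N"
  shows "partial_trace_L2 B (multi_adjacency P) m = weighted_adjacency (S_V P) m"
proof (intro ext)
  fix i' j'
  have "partial_trace_L2 B (multi_adjacency P) m i' j' =
      (\<Sum>b\<in>B. \<Sum>k'\<in>UNIV. \<Sum>l'\<in>UNIV. cnj (b k' l') *
        (\<Sum>i\<in>UNIV. \<Sum>g\<in>UNIV. m g i * mtr (mmult (\<lambda>k l. P (i, i', k, k') (g, j', l, l')) b)))"
    unfolding partial_trace_L2_def slice_2_def multi_adjacency_kron_entry ..
  also have "\<dots> = (\<Sum>i\<in>UNIV. \<Sum>g\<in>UNIV. m g i * (\<Sum>k'\<in>UNIV. \<Sum>l'\<in>UNIV.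
        \<Sum>b\<in>B. cnj (b k' l') * mtr (mmult (\<lambda>k l. P (i, i', k, k') (g, j', l, l')) b)))"
    by (rule sum_pull_out_weights)
  also have "\<dots> = (\<Sum>i\<in>UNIV. \<Sum>g\<in>UNIV. m g i * (\<Sum>k'\<in>UNIV. \<Sum>l'\<in>UNIV.
        P (i, i', l', k') (g, j', k', l')))"
    using hs_onb_reproducing[OF onb adj_closed[OF slices]] by simp
  also have "\<dots> = weighted_adjacency (S_V P) m i' j'"
    unfolding weighted_adjacency_S_V_entry by (subst (2) sum.swap) (rule refl)
  finally show "partial_trace_L2 B (multi_adjacency P) m i' j' = weighted_adjacency (S_V P) m i' j'" .
qed

theorem proposition4p12:
  fixes M :: "'h::finite sqmat set" and N :: "'k::finite sqmat set"
    and V :: "('h \<times> 'k) sqmat set" and P :: "('h \<times> 'h \<times> 'k \<times> 'k) sqmat"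
    and B :: "'k sqmat set"
  assumes "fd_vn_algebra M" and "fd_vn_algebra N"
    and "minimally_represented M" and "minimally_represented N"
    and "quantum_multi_relation M N V"
    and "multi_edge_indicator M N V P"
    and "hs_onb N B"
    and "m \<in> M"
  shows "partial_trace_L2 B (multi_adjacency P) m = weighted_adjacency (S_V P) m"
proof (rule partial_trace_multi_adjacency)
  show "hs_onb N B"
    by fact
  show "madj c \<in> N" if "c \<in> N" for c
    using assms(2) that unfolding fd_vn_algebra_def by blast
  have "is_subspace N" and "P \<in> alg_tensor4 M M N N"
    using assms(2,6) unfolding fd_vn_algebra_def multi_edge_indicator_def by blast+
  then show "(\<lambda>k l. P (i, i', k, k') (g, j', l, l')) \<in> N" for i i' g j' k' l'
    by (rule alg_tensor4_slice_3)
qed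

end
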